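(* Let $p$ be a prime, $d\ge1$, and $\boldsymbol n\in\mathbb{Z}^d$. Let $(a_k)_{k\in\mathbb{Z}}$ be elements of $\mathbb{Z}_p$ such that for all integers $l$ and $s\ge0$, $$\sum_{k:\ \lfloor k/p^s\rfloor=l}a_k\equiv0\pmod{p^s}.$$ Let $C:\mathbb{Z}^d\times\mathbb{Z}\to\mathbb{Z}_p$ be such that for all $k\in\mathbb{Z}$ and integers $r\ge1$, $$C(p^r\boldsymbol n;k)\equiv C(p^{r-1}\boldsymbol n;\lfloor k/p\rfloor)\pmod{p^r}.$$ Then for all integers $l$ and $r\ge0$, $$\sum_{k:\ \lfloor k/p^r\rfloor=l}a_k\,C(p^r\boldsymbol n;k)\equiv0\pmod{p^r}.$$
   Context: $\mathbb{Z}_p$ denotes the $p$-adic integers and $\lfloor x\rfloor$ the floor function; each sum over $\{k:\lfloor k/p^s\rfloor=l\}$ is a finite sum over the $p^s$ integers $k=lp^s,\dots,lp^s+p^s-1$. *)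

theory Defs
  imports "HOL-Computational_Algebra.Primes"
begin

text \<open>The p-adic integers Z_p, modelled as the inverse limit of Z/p^n Z:
  an element is a coherent sequence x of canonical residues, x n in {0..<p^n},
  with x n = x (n+1) mod p^n.\<close>

definition padic_int :: "nat \<Rightarrow> (nat \<Rightarrow> int) \<Rightarrow> bool" where
  "padic_int p x \<longleftrightarrow> (\<forall>n. 0 \<le> x n \<and> x n < int p ^ n \<and> x n = x (Suc n) mod int p ^ n)"

definition padd :: "nat \<Rightarrow> (nat \<Rightarrow> int) \<Rightarrow> (nat \<Rightarrow> int) \<Rightarrow> (nat \<Rightarrow> int)" where
  "padd p x y = (\<lambda>n. (x n + y n) mod int p ^ n)"

definition pmul :: "nat \<Rightarrow> (nat \<Rightarrow> int) \<Rightarrow> (nat \<Rightarrow> int) \<Rightarrow> (nat \<Rightarrow> int)" where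
  "pmul p x y = (\<lambda>n. (x n * y n) mod int p ^ n)"

definition psum :: "nat \<Rightarrow> ('a \<Rightarrow> nat \<Rightarrow> int) \<Rightarrow> 'a set \<Rightarrow> (nat \<Rightarrow> int)" where
  "psum p f A = (\<lambda>n. (\<Sum>k\<in>A. f k n) mod int p ^ n)"

text \<open>Congruence modulo p^s in Z_p: x - y lies in p^s Z_p, i.e. x and y have the
  same image in Z_p / p^s Z_p = Z/p^s Z.\<close>
definition pcong :: "nat \<Rightarrow> nat \<Rightarrow> (nat \<Rightarrow> int) \<Rightarrow> (nat \<Rightarrow> int) \<Rightarrow> bool" where
  "pcong p s x y \<longleftrightarrow> x s mod int p ^ s = y s mod int p ^ s"

definition pzero :: "nat \<Rightarrow> int" where "pzero = (\<lambda>n. 0)"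

end

theory Submission
  imports Defs
begin

text \<open>Work with the integer components at level \<open>r\<close>. Modulo \<open>p^r\<close> the weight \<open>C(p^r n; k)\<close>
  may be replaced by \<open>C(p^(r-1) n; k div p)\<close>, which only depends on the \<open>p\<close>-block of \<open>k\<close>.
  Grouping a \<open>p^r\<close>-block into \<open>p\<close>-blocks then turns the sum into \<open>p\<close> times the sum of
  \<open>b m * C(p^(r-1) n; m)\<close> over a \<open>p^(r-1)\<close>-block, where \<open>p * b m\<close> is the \<open>p\<close>-block sum of the
  \<open>a k\<close>. The block sums of the \<open>b m\<close> are those of the \<open>a k\<close> divided by \<open>p\<close>, so the \<open>b m\<close>
  satisfy the hypothesis one level lower and induction on \<open>r\<close> applies.\<close>

lemma finite_int_div_fiber:
  fixes q :: int
  assumes "q > 0"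
  shows "finite {k. k div q = l}"
proof (rule finite_subset)
  show "{k. k div q = l} \<subseteq> {l * q..<l * q + q}"
  proof
    fix k assume "k \<in> {k. k div q = l}"
    then have "k = l * q + k mod q" using div_mult_mod_eq[of k q] by simp
    moreover have "0 \<le> k mod q" "k mod q < q" using assms by auto
    ultimately show "k \<in> {l * q..<l * q + q}" by simp
  qed
qed simp

lemma sum_int_div_fiber_mult:
  fixes P q :: int
  assumes "P > 0" "q > 0"
  shows "(\<Sum>k\<in>{k. k div (P * q) = l}. f k) = (\<Sum>m\<in>{m. m div q = l}. \<Sum>k\<in>{k. k div P = m}. f k)"
proof -
  have "{k. k div (P * q) = l} = (\<Union>m\<in>{m. m div q = l}. {k. k div P = m})"
    using assms by (auto simp: zdiv_zmult2_eq)
  then show ?thesis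
    using assms by (simp, subst sum.UNION_disjoint) (auto simp: finite_int_div_fiber)
qed

lemma dvd_block_sum_mult:
  fixes P :: int and a :: "int \<Rightarrow> int" and c :: "nat \<Rightarrow> int \<Rightarrow> int"
  assumes "P > 0"
    and "\<And>s l. s \<le> r \<Longrightarrow> P ^ s dvd (\<Sum>k\<in>{k. k div P ^ s = l}. a k)"
    and "\<And>j k. 1 \<le> j \<Longrightarrow> j \<le> r \<Longrightarrow> P ^ j dvd c j k - c (j - 1) (k div P)"
  shows "P ^ r dvd (\<Sum>k\<in>{k. k div P ^ r = l}. a k * c r k)"
  using assms(2,3)
proof (induction r arbitrary: a l)
  case 0
  then show ?case by simp
next
  case (Suc r)
  define A where "A m = (\<Sum>k\<in>{k. k div P = m}. a k)" for m
  define b where "b m = A m div P" for m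
  have A_eq: "A m = P * b m" for m
    using Suc.prems(1)[of 1 m] by (simp add: A_def b_def)
  have reduce: "P ^ Suc r dvd (\<Sum>k\<in>{k. k div P ^ Suc r = l}. a k * c (Suc r) k)
      - (\<Sum>k\<in>{k. k div P ^ Suc r = l}. a k * c r (k div P))"
    unfolding sum_subtractf[symmetric] right_diff_distrib[symmetric]
    using Suc.prems(2)[of "Suc r"] by (intro dvd_sum dvd_mult) simp
  have "(\<Sum>k\<in>{k. k div P ^ Suc r = l}. a k * c r (k div P))
      = (\<Sum>m\<in>{m. m div P ^ r = l}. \<Sum>k\<in>{k. k div P = m}. a k * c r (k div P))"
    unfolding power_Suc using \<open>P > 0\<close> by (simp add: sum_int_div_fiber_mult)
  also have "\<dots> = (\<Sum>m\<in>{m. m div P ^ r = l}. A m * c r m)"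
    unfolding A_def sum_distrib_right by (intro sum.cong refl) auto
  also have "\<dots> = P * (\<Sum>m\<in>{m. m div P ^ r = l}. b m * c r m)"
    unfolding A_eq sum_distrib_left by (simp add: mult.assoc)
  finally have regrouped: "(\<Sum>k\<in>{k. k div P ^ Suc r = l}. a k * c r (k div P))
      = P * (\<Sum>m\<in>{m. m div P ^ r = l}. b m * c r m)" .
  have b_blocks: "P ^ s dvd (\<Sum>m\<in>{m. m div P ^ s = l'}. b m)" if "s \<le> r" for s l'
  proof -
    have "P * (\<Sum>m\<in>{m. m div P ^ s = l'}. b m) = (\<Sum>k\<in>{k. k div (P * P ^ s) = l'}. a k)"
      unfolding sum_distrib_left A_eq[symmetric] A_def
      using \<open>P > 0\<close> by (simp add: sum_int_div_fiber_mult)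
    then have "P * P ^ s dvd P * (\<Sum>m\<in>{m. m div P ^ s = l'}. b m)"
      using Suc.prems(1)[of "Suc s" l'] that by simp
    then show ?thesis using \<open>P > 0\<close> by simp
  qed
  have "P ^ r dvd (\<Sum>m\<in>{m. m div P ^ r = l}. b m * c r m)"
    using Suc.IH[of b] b_blocks Suc.prems(2) by simp
  then have "P ^ Suc r dvd (\<Sum>k\<in>{k. k div P ^ Suc r = l}. a k * c r (k div P))"
    unfolding regrouped by simp
  from dvd_add[OF reduce this] show ?case by simp
qed

lemma padic_int_mod_power:
  assumes "padic_int p x" "s \<le> r"
  shows "x r mod int p ^ s = x s"
  using assms(2)
proof (induction r rule: dec_induct)
  case base
  have "0 \<le> x s" "x s < int p ^ s" using assms(1) unfolding padic_int_def by blast+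
  then show ?case by simp
next
  case (step r)
  have "int p ^ s dvd int p ^ r" using step.hyps(1) by (simp add: le_imp_power_dvd)
  then have "x (Suc r) mod int p ^ s = x (Suc r) mod int p ^ r mod int p ^ s"
    by (simp add: mod_mod_cancel)
  also have "x (Suc r) mod int p ^ r = x r"
    using assms(1) unfolding padic_int_def by metis
  finally show ?case using step.IH by simp
qed

lemma pcong_padic_int_iff_dvd:
  assumes "padic_int p x" "padic_int p y" "s \<le> r"
  shows "pcong p s x y \<longleftrightarrow> int p ^ s dvd x r - y r"
proof -
  have "x r mod int p ^ s = x s mod int p ^ s" "y r mod int p ^ s = y s mod int p ^ s"
    using padic_int_mod_power[OF assms(1)] padic_int_mod_power[OF assms(2)] assms(3) by simp_all
  then show ?thesis
    unfolding pcong_def mod_eq_dvd_iff[symmetric] by simp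
qed

lemma pcong_psum_pzero_iff:
  "pcong p r (psum p f A) pzero \<longleftrightarrow> int p ^ r dvd (\<Sum>k\<in>A. f k r)"
  by (simp add: pcong_def psum_def pzero_def mod_sum_eq dvd_eq_mod_eq_0)

lemma pcong_psum_padic_int_iff_dvd:
  assumes "\<And>k. padic_int p (f k)" "s \<le> r"
  shows "pcong p s (psum p f A) pzero \<longleftrightarrow> int p ^ s dvd (\<Sum>k\<in>A. f k r)"
proof -
  have "(\<Sum>k\<in>A. f k r) mod int p ^ s = (\<Sum>k\<in>A. f k r mod int p ^ s) mod int p ^ s"
    by (rule mod_sum_eq[symmetric])
  also have "\<dots> = (\<Sum>k\<in>A. f k s mod int p ^ s) mod int p ^ s"
    using assms by (simp add: padic_int_mod_power)
  also have "\<dots> = (\<Sum>k\<in>A. f k s) mod int p ^ s"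
    by (rule mod_sum_eq)
  finally show ?thesis
    by (simp add: pcong_psum_pzero_iff dvd_eq_mod_eq_0)
qed

theorem lemma5p6:
  fixes p :: nat and n :: "'d::finite \<Rightarrow> int"
    and a :: "int \<Rightarrow> nat \<Rightarrow> int"
    and C :: "('d \<Rightarrow> int) \<Rightarrow> int \<Rightarrow> nat \<Rightarrow> int"
  assumes "prime p"
    and "\<And>k. padic_int p (a k)"
    and "\<And>m k. padic_int p (C m k)"
    and "\<And>l s. pcong p s (psum p a {k. k div int p ^ s = l}) pzero"
    and "\<And>k r. r \<ge> 1 \<Longrightarrow>
           pcong p r (C (\<lambda>i. int p ^ r * n i) k) (C (\<lambda>i. int p ^ (r - 1) * n i) (k div int p))"
  shows "\<And>l r. pcong p r
           (psum p (\<lambda>k. pmul p (a k) (C (\<lambda>i. int p ^ r * n i) k)) {k. k div int p ^ r = l}) pzero"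
proof -
  fix l r
  have "int p > 0" using \<open>prime p\<close> prime_gt_0_nat by simp
  moreover have "int p ^ s dvd (\<Sum>k\<in>{k. k div int p ^ s = l'}. a k r)" if "s \<le> r" for s l'
    using assms(4) pcong_psum_padic_int_iff_dvd[where f = a, OF assms(2) that] by blast
  moreover have "int p ^ j dvd C (\<lambda>i. int p ^ j * n i) k r - C (\<lambda>i. int p ^ (j - 1) * n i) (k div int p) r"
    if "1 \<le> j" "j \<le> r" for j k
    using assms(5)[OF that(1)] pcong_padic_int_iff_dvd[OF assms(3) assms(3) that(2)] by blast
  ultimately have "int p ^ r dvd (\<Sum>k\<in>{k. k div int p ^ r = l}. a k r * C (\<lambda>i. int p ^ r * n i) k r)"
    by (rule dvd_block_sum_mult)
  then show "pcong p r
      (psum p (\<lambda>k. pmul p (a k) (C (\<lambda>i. int p ^ r * n i) k)) {k. k div int p ^ r = l}) pzero"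
    by (simp add: pcong_psum_pzero_iff pmul_def dvd_eq_mod_eq_0 mod_sum_eq)
qed

end
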